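(* Consider Algorithm PDS-SPP described in the context (with an arbitrary vector $v_k$ in the $x$-update), and let $$C=\sum_{k=1}^N\frac{\beta_k}{T_k}\sum_{t=1}^{T_k}\big[q_k^tU(z_k^{t-1},z)-q_k^tU(z_k^t,z)\big],\quad D=\sum_{k=1}^N\frac{\beta_k}{T_k}\sum_{t=1}^{T_k}\big[\eta_k^tV(x_k^{t-1},x)-(\mu+\eta_k^t+p_k)V(x_k^t,x)+p_kV(x_{k-1},x)\big].$$ If $q_k^t\le q_k^{t-1}$ for all $t\ge2,k\ge1$ and $\beta_kT_{k-1}q_k^1\le\beta_{k-1}T_kq_{k-1}^{T_{k-1}}$ for all $k\ge2$, then for every $z\in\mathcal Z$ $$C\le\frac{\beta_1q_1^1}{T_1}U(z_0,z)-\frac{\beta_Nq_N^{T_N}}{T_N}U(z_N,z).$$ If $\eta_k^t\le\mu+\eta_k^{t-1}+p_k$ for all $t\ge2,k\ge1$ and $\beta_kT_{k-1}(\eta_k^1+p_kT_k)\le\beta_{k-1}T_k(\mu+\eta_{k-1}^{T_{k-1}}+p_{k-1})$ for all $k\ge2$, then for every $x\in\mathcal X$ $$D\le\frac{\beta_1}{T_1}(\eta_1^1+p_1T_1)V(x_0,x)-\frac{\beta_N}{T_N}(\mu+\eta_N^{T_N}+p_N)V(x_N,x).$$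
   Context: Setting. $\mathcal X$ closed convex subset of a finite-dimensional space with norm $\|\cdot\|$; $\mathcal Z$ closed convex subset of a finite-dimensional space with norm $|\cdot|$; $\mathcal A$ linear; $h$ convex on $\mathcal Z$; $\mu\ge0$; $\nu$ $1$-strongly convex on $\mathcal X$ w.r.t. $\|\cdot\|$; $\zeta$ $1$-strongly convex on $\mathcal Z$ w.r.t. $|\cdot|$; $U(\hat z,z)=\zeta(z)-\zeta(\hat z)-\langle\zeta'(\hat z),z-\hat z\rangle$, $V(\hat x,x)=\nu(x)-\nu(\hat x)-\langle\nu'(\hat x),x-\hat x\rangle$. Algorithm: $x_0\in\mathcal X$, $z_0\in\mathcal Z$; for $k=1,\dots,N$, with some vector $v_k$ and positive integer $T_k$: $x_k^0=x_{k-1}$, $z_k^0=z_{k-1}$, $x_k^{-1}=x_{k-1}^{T_{k-1}-1}$ ($x_1^{-1}=x_0$); for $t=1,\dots,T_k$: $\tilde u_k^t=x_k^{t-1}+\alpha_k^t(x_k^{t-1}-x_k^{t-2})$, $z_k^t=\arg\min_{z\in\mathcal Z}h(z)+\langle-\mathcal A\tilde u_k^t,z\rangle+q_k^tU(z_k^{t-1},z)$, $x_k^t=\arg\min_{x\in\mathcal X}\mu\nu(x)+\langle v_k+\mathcal A^\top z_k^t,x\rangle+\eta_k^tV(x_k^{t-1},x)+p_kV(x_{k-1},x)$; $x_k=x_k^{T_k}$, $z_k=z_k^{T_k}$. Parameters: positive $\beta_k,q_k^t,\eta_k^t,p_k$. *)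

theory Defs
  imports "HOL-Analysis.Analysis"
begin

definition is_norm :: "('a::real_vector \<Rightarrow> real) \<Rightarrow> bool" where
  "is_norm n \<longleftrightarrow> (\<forall>x. 0 \<le> n x) \<and> (\<forall>x. n x = 0 \<longleftrightarrow> x = 0)
     \<and> (\<forall>c x. n (c *\<^sub>R x) = \<bar>c\<bar> * n x) \<and> (\<forall>x y. n (x + y) \<le> n x + n y)"

definition strongly_convex_on :: "'a::real_vector set \<Rightarrow> ('a \<Rightarrow> real) \<Rightarrow> ('a \<Rightarrow> real) \<Rightarrow> bool" where
  "strongly_convex_on S n f \<longleftrightarrow>
     (\<forall>x\<in>S. \<forall>y\<in>S. \<forall>l::real. 0 \<le> l \<and> l \<le> 1 \<longrightarrow>
        f (l *\<^sub>R x + (1 - l) *\<^sub>R y) \<le> l * f x + (1 - l) * f y - l * (1 - l) / 2 * (n (x - y))\<^sup>2)"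

definition subgradient_sel_on :: "'a::real_inner set \<Rightarrow> ('a \<Rightarrow> real) \<Rightarrow> ('a \<Rightarrow> 'a) \<Rightarrow> bool" where
  "subgradient_sel_on S f g \<longleftrightarrow> (\<forall>a\<in>S. \<forall>b\<in>S. f b \<ge> f a + inner (g a) (b - a))"

definition bregman :: "('a::real_inner \<Rightarrow> real) \<Rightarrow> ('a \<Rightarrow> 'a) \<Rightarrow> 'a \<Rightarrow> 'a \<Rightarrow> real" where
  "bregman f g a b = f b - f a - inner (g a) (b - a)"

definition is_argmin_on :: "'a set \<Rightarrow> ('a \<Rightarrow> real) \<Rightarrow> 'a \<Rightarrow> bool" where
  "is_argmin_on S F y \<longleftrightarrow> y \<in> S \<and> (\<forall>w\<in>S. F y \<le> F w)"

end

theory Submission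
  imports Defs
begin

text \<open>Both estimates are pure bookkeeping with nonnegative Bregman distances: within an epoch,
  a coefficient that does not exceed the one of the preceding term lets the sum telescope after
  dropping nonnegative leftovers; across epochs, the averaged bound of epoch \<open>k\<close> starts with a
  coefficient dominated by the closing coefficient of epoch \<open>k - 1\<close>, so the epoch bounds telescope
  once more.\<close>

lemma sum_telescope_le:
  fixes a s r :: "nat \<Rightarrow> 'a::linordered_idom"
  assumes "1 \<le> n"
    and "\<And>t. 1 \<le> t \<Longrightarrow> t < n \<Longrightarrow> 0 \<le> a t"
    and "\<And>t. 2 \<le> t \<Longrightarrow> t \<le> n \<Longrightarrow> s t \<le> r (t - 1)"
  shows "(\<Sum>t=1..n. s t * a (t - 1) - r t * a t) \<le> s 1 * a 0 - r n * a n"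
  using assms
proof (induction n rule: nat_induct_at_least)
  case base
  then show ?case by simp
next
  case (Suc n)
  have IH: "(\<Sum>t=1..n. s t * a (t - 1) - r t * a t) \<le> s 1 * a 0 - r n * a n"
    using Suc by auto
  have "s (Suc n) \<le> r n"
    using Suc.prems(2)[of "Suc n"] Suc.hyps by auto
  moreover have "0 \<le> a n"
    using Suc.prems(1)[of n] Suc.hyps by auto
  ultimately have "s (Suc n) * a n \<le> r n * a n"
    by (rule mult_right_mono)
  then show ?case using IH Suc.hyps by simp
qed

lemma sum_telescope_const_le:
  fixes a s r :: "nat \<Rightarrow> 'a::linordered_field"
  assumes "1 \<le> n"
    and "\<And>t. 1 \<le> t \<Longrightarrow> t < n \<Longrightarrow> 0 \<le> a t"
    and "\<And>t. 2 \<le> t \<Longrightarrow> t \<le> n \<Longrightarrow> s t \<le> r (t - 1)"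
  shows "(\<Sum>t=1..n. s t * a (t - 1) - r t * a t + e * a 0) \<le> (s 1 + e * of_nat n) * a 0 - r n * a n"
proof -
  have "(\<Sum>t=1..n. s t * a (t - 1) - r t * a t + e * a 0)
      = (\<Sum>t=1..n. s t * a (t - 1) - r t * a t) + of_nat n * (e * a 0)"
    by (simp add: sum.distrib)
  also have "\<dots> \<le> s 1 * a 0 - r n * a n + of_nat n * (e * a 0)"
    using sum_telescope_le[of n a s r, OF assms] by simp
  finally show ?thesis by (simp add: algebra_simps)
qed

lemma epoch_sum_telescope_le:
  fixes a :: "nat \<Rightarrow> nat \<Rightarrow> 'a::linordered_field" and b beta e :: "nat \<Rightarrow> 'a"
    and s r :: "nat \<Rightarrow> nat \<Rightarrow> 'a"
  assumes N: "1 \<le> N" and T: "\<And>k. 1 \<le> T k" and beta: "\<And>k. 0 \<le> beta k"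
    and init: "\<And>k. 1 \<le> k \<Longrightarrow> k \<le> N \<Longrightarrow> a k 0 = b (k - 1)"
    and fin: "\<And>k. 1 \<le> k \<Longrightarrow> k \<le> N \<Longrightarrow> b k = a k (T k)"
    and nonneg: "\<And>k t. 1 \<le> k \<Longrightarrow> k \<le> N \<Longrightarrow> t \<le> T k \<Longrightarrow> 0 \<le> a k t"
    and within: "\<forall>k\<in>{1..N}. \<forall>t\<in>{2..T k}. s k t \<le> r k (t - 1)"
    and across: "\<forall>k\<in>{2..N}. beta k * of_nat (T (k - 1)) * (s k 1 + e k * of_nat (T k))
                   \<le> beta (k - 1) * of_nat (T k) * r (k - 1) (T (k - 1))"
  shows "(\<Sum>k=1..N. beta k / of_nat (T k) *
           (\<Sum>t=1..T k. s k t * a k (t - 1) - r k t * a k t + e k * b (k - 1)))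
         \<le> beta 1 / of_nat (T 1) * (s 1 1 + e 1 * of_nat (T 1)) * b 0
            - beta N / of_nat (T N) * r N (T N) * b N"
proof -
  define c where "c k = beta k / of_nat (T k) * (s k 1 + e k * of_nat (T k))" for k
  define d where "d k = beta k / of_nat (T k) * r k (T k)" for k
  have T_pos: "0 < (of_nat (T k) :: 'a)" for k
    using T[of k] by simp
  have "(\<Sum>k=1..N. beta k / of_nat (T k) *
           (\<Sum>t=1..T k. s k t * a k (t - 1) - r k t * a k t + e k * b (k - 1)))
        \<le> (\<Sum>k=1..N. c k * b (k - 1) - d k * b k)"
  proof (rule sum_mono)
    fix k assume "k \<in> {1..N}"
    then have k: "1 \<le> k" "k \<le> N" by auto
    have "(\<Sum>t=1..T k. s k t * a k (t - 1) - r k t * a k t + e k * b (k - 1))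
        \<le> (s k 1 + e k * of_nat (T k)) * b (k - 1) - r k (T k) * b k"
      using sum_telescope_const_le[of "T k" "a k" "s k" "r k" "e k"]
        T[of k] within nonneg[OF k] init[OF k] fin[OF k] k by auto
    then have "beta k / of_nat (T k) *
           (\<Sum>t=1..T k. s k t * a k (t - 1) - r k t * a k t + e k * b (k - 1))
        \<le> beta k / of_nat (T k) *
           ((s k 1 + e k * of_nat (T k)) * b (k - 1) - r k (T k) * b k)"
      using beta[of k] T_pos[of k] by (intro mult_left_mono) auto
    then show "beta k / of_nat (T k) *
           (\<Sum>t=1..T k. s k t * a k (t - 1) - r k t * a k t + e k * b (k - 1))
        \<le> c k * b (k - 1) - d k * b k"
      unfolding c_def d_def by (simp only: right_diff_distrib mult.assoc)
  qed
  also have "\<dots> \<le> c 1 * b 0 - d N * b N"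
  proof (rule sum_telescope_le[OF N])
    show "0 \<le> b k" if "1 \<le> k" "k < N" for k
      using fin[of k] nonneg[of k "T k"] that by auto
    show "c k \<le> d (k - 1)" if "2 \<le> k" "k \<le> N" for k
      using across that T_pos[of k] T_pos[of "k - 1"]
      unfolding c_def d_def by (auto simp: divide_simps mult_ac)
  qed
  finally show ?thesis
    unfolding c_def d_def by (simp add: mult.assoc)
qed

lemma bregman_nonneg:
  assumes "subgradient_sel_on S f g" "a \<in> S" "b \<in> S"
  shows "0 \<le> bregman f g a b"
  using assms unfolding subgradient_sel_on_def bregman_def by force

lemma epoch_iterates_mem:
  fixes a :: "nat \<Rightarrow> nat \<Rightarrow> 'a" and b :: "nat \<Rightarrow> 'a" and T :: "nat \<Rightarrow> nat"
  assumes b0: "b 0 \<in> S" and T: "\<And>k. 1 \<le> T k"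
    and init: "\<And>k. 1 \<le> k \<Longrightarrow> k \<le> N \<Longrightarrow> a k 0 = b (k - 1)"
    and step: "\<And>k t. 1 \<le> k \<Longrightarrow> k \<le> N \<Longrightarrow> 1 \<le> t \<Longrightarrow> t \<le> T k \<Longrightarrow> a k t \<in> S"
    and fin: "\<And>k. 1 \<le> k \<Longrightarrow> k \<le> N \<Longrightarrow> b k = a k (T k)"
    and k: "1 \<le> k" "k \<le> N" and t: "t \<le> T k"
  shows "a k t \<in> S"
proof -
  have outer: "b j \<in> S" if "j \<le> N" for j
    using b0 fin[of j] step[of j "T j"] T[of j] that by (cases "j = 0") auto
  show ?thesis
    using init[OF k] outer[of "k - 1"] step[OF k _ t] k by (cases "t = 0") auto
qed

lemma bregman_epoch_sum_le:
  fixes y :: "nat \<Rightarrow> nat \<Rightarrow> 'a::real_inner" and yo :: "nat \<Rightarrow> 'a"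
    and beta e :: "nat \<Rightarrow> real" and s r :: "nat \<Rightarrow> nat \<Rightarrow> real"
  assumes g: "subgradient_sel_on S f g" and N: "1 \<le> N" and T: "\<And>k. 1 \<le> T k"
    and beta: "\<And>k. 0 \<le> beta k" and y0: "yo 0 \<in> S"
    and init: "\<And>k. 1 \<le> k \<Longrightarrow> k \<le> N \<Longrightarrow> y k 0 = yo (k - 1)"
    and step: "\<And>k t. 1 \<le> k \<Longrightarrow> k \<le> N \<Longrightarrow> 1 \<le> t \<Longrightarrow> t \<le> T k \<Longrightarrow> y k t \<in> S"
    and fin: "\<And>k. 1 \<le> k \<Longrightarrow> k \<le> N \<Longrightarrow> yo k = y k (T k)"
    and within: "\<forall>k\<in>{1..N}. \<forall>t\<in>{2..T k}. s k t \<le> r k (t - 1)"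
    and across: "\<forall>k\<in>{2..N}. beta k * T (k - 1) * (s k 1 + e k * T k)
                   \<le> beta (k - 1) * T k * r (k - 1) (T (k - 1))"
    and w: "w \<in> S"
  shows "(\<Sum>k=1..N. beta k / T k * (\<Sum>t=1..T k.
           s k t * bregman f g (y k (t - 1)) w - r k t * bregman f g (y k t) w
           + e k * bregman f g (yo (k - 1)) w))
         \<le> beta 1 / T 1 * (s 1 1 + e 1 * T 1) * bregman f g (yo 0) w
            - beta N / T N * r N (T N) * bregman f g (yo N) w"
proof (rule epoch_sum_telescope_le[OF N T beta _ _ _ within across])
  show "bregman f g (y k 0) w = bregman f g (yo (k - 1)) w" if "1 \<le> k" "k \<le> N" for k
    using init[OF that] by simp
  show "bregman f g (yo k) w = bregman f g (y k (T k)) w" if "1 \<le> k" "k \<le> N" for k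
    using fin[OF that] by simp
  show "0 \<le> bregman f g (y k t) w" if "1 \<le> k" "k \<le> N" "t \<le> T k" for k t
    using epoch_iterates_mem[where a = y and b = yo, OF y0 T init step fin that]
    by (rule bregman_nonneg[OF g _ w])
qed

lemma bregman_epoch_telescope_le:
  fixes y :: "nat \<Rightarrow> nat \<Rightarrow> 'a::real_inner" and yo :: "nat \<Rightarrow> 'a"
    and beta :: "nat \<Rightarrow> real" and s :: "nat \<Rightarrow> nat \<Rightarrow> real"
  assumes g: "subgradient_sel_on S f g" and N: "1 \<le> N" and T: "\<And>k. 1 \<le> T k"
    and beta: "\<And>k. 0 \<le> beta k" and y0: "yo 0 \<in> S"
    and init: "\<And>k. 1 \<le> k \<Longrightarrow> k \<le> N \<Longrightarrow> y k 0 = yo (k - 1)"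
    and step: "\<And>k t. 1 \<le> k \<Longrightarrow> k \<le> N \<Longrightarrow> 1 \<le> t \<Longrightarrow> t \<le> T k \<Longrightarrow> y k t \<in> S"
    and fin: "\<And>k. 1 \<le> k \<Longrightarrow> k \<le> N \<Longrightarrow> yo k = y k (T k)"
    and within: "\<forall>k\<in>{1..N}. \<forall>t\<in>{2..T k}. s k t \<le> s k (t - 1)"
    and across: "\<forall>k\<in>{2..N}. beta k * T (k - 1) * s k 1 \<le> beta (k - 1) * T k * s (k - 1) (T (k - 1))"
    and w: "w \<in> S"
  shows "(\<Sum>k=1..N. beta k / T k * (\<Sum>t=1..T k.
           s k t * bregman f g (y k (t - 1)) w - s k t * bregman f g (y k t) w))
         \<le> beta 1 * s 1 1 / T 1 * bregman f g (yo 0) w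
            - beta N * s N (T N) / T N * bregman f g (yo N) w"
  using bregman_epoch_sum_le[where beta = beta and e = "\<lambda>_. 0",
      OF g N T beta y0 init step fin within _ w] across
  by simp

theorem lemma5p5:
  fixes Xs :: "'a::euclidean_space set" and Zs :: "'b::euclidean_space set"
    and nx :: "'a \<Rightarrow> real" and nz :: "'b \<Rightarrow> real"
    and A :: "'a \<Rightarrow> 'b" and h :: "'b \<Rightarrow> real" and mu :: real
    and nu :: "'a \<Rightarrow> real" and nu' :: "'a \<Rightarrow> 'a"
    and zeta :: "'b \<Rightarrow> real" and zeta' :: "'b \<Rightarrow> 'b"
    and N :: nat and T :: "nat \<Rightarrow> nat" and v :: "nat \<Rightarrow> 'a"
    and alpha q eta :: "nat \<Rightarrow> nat \<Rightarrow> real" and beta p :: "nat \<Rightarrow> real"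
    and xo :: "nat \<Rightarrow> 'a" and zo :: "nat \<Rightarrow> 'b"
    and xi :: "nat \<Rightarrow> nat \<Rightarrow> 'a" and zi :: "nat \<Rightarrow> nat \<Rightarrow> 'b"
  assumes Xs: "closed Xs" "convex Xs" and Zs: "closed Zs" "convex Zs"
    and nx: "is_norm nx" and nz: "is_norm nz"
    and A: "linear A" and h: "convex_on Zs h" and mu: "mu \<ge> 0"
    and nu: "strongly_convex_on Xs nx nu" and nu': "subgradient_sel_on Xs nu nu'"
    and zeta: "strongly_convex_on Zs nz zeta" and zeta': "subgradient_sel_on Zs zeta zeta'"
    and N: "N \<ge> 1"
    and T: "\<And>k. T k \<ge> 1"
    and beta: "\<And>k. beta k > 0" and p: "\<And>k. p k > 0"
    and q: "\<And>k t. q k t > 0" and eta: "\<And>k t. eta k t > 0"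
    and x0: "xo 0 \<in> Xs" and z0: "zo 0 \<in> Zs"
    and init_x: "\<And>k. 1 \<le> k \<Longrightarrow> k \<le> N \<Longrightarrow> xi k 0 = xo (k - 1)"
    and init_z: "\<And>k. 1 \<le> k \<Longrightarrow> k \<le> N \<Longrightarrow> zi k 0 = zo (k - 1)"
    and z_step: "\<And>k t. 1 \<le> k \<Longrightarrow> k \<le> N \<Longrightarrow> 1 \<le> t \<Longrightarrow> t \<le> T k \<Longrightarrow>
       (let xprev2 = (if t = 1 then (if k = 1 then xo 0 else xi (k - 1) (T (k - 1) - 1))
                      else xi k (t - 2));
            u = xi k (t - 1) + alpha k t *\<^sub>R (xi k (t - 1) - xprev2)
        in is_argmin_on Zs
             (\<lambda>z. h z + inner (- A u) z + q k t * bregman zeta zeta' (zi k (t - 1)) z)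
             (zi k t))"
    and x_step: "\<And>k t. 1 \<le> k \<Longrightarrow> k \<le> N \<Longrightarrow> 1 \<le> t \<Longrightarrow> t \<le> T k \<Longrightarrow>
       is_argmin_on Xs
         (\<lambda>x. mu * nu x + (inner (v k) x + inner (zi k t) (A x))
              + eta k t * bregman nu nu' (xi k (t - 1)) x + p k * bregman nu nu' (xo (k - 1)) x)
         (xi k t)"
    and fin_x: "\<And>k. 1 \<le> k \<Longrightarrow> k \<le> N \<Longrightarrow> xo k = xi k (T k)"
    and fin_z: "\<And>k. 1 \<le> k \<Longrightarrow> k \<le> N \<Longrightarrow> zo k = zi k (T k)"
  shows
   "((\<forall>k\<in>{1..N}. \<forall>t\<in>{2..T k}. q k t \<le> q k (t - 1)) \<and>
     (\<forall>k\<in>{2..N}. beta k * T (k - 1) * q k 1 \<le> beta (k - 1) * T k * q (k - 1) (T (k - 1)))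
     \<longrightarrow> (\<forall>z\<in>Zs.
       (\<Sum>k=1..N. beta k / T k * (\<Sum>t=1..T k.
          q k t * bregman zeta zeta' (zi k (t - 1)) z - q k t * bregman zeta zeta' (zi k t) z))
       \<le> beta 1 * q 1 1 / T 1 * bregman zeta zeta' (zo 0) z
          - beta N * q N (T N) / T N * bregman zeta zeta' (zo N) z))
    \<and>
    ((\<forall>k\<in>{1..N}. \<forall>t\<in>{2..T k}. eta k t \<le> mu + eta k (t - 1) + p k) \<and>
     (\<forall>k\<in>{2..N}. beta k * T (k - 1) * (eta k 1 + p k * T k)
                   \<le> beta (k - 1) * T k * (mu + eta (k - 1) (T (k - 1)) + p (k - 1)))
     \<longrightarrow> (\<forall>x\<in>Xs.
       (\<Sum>k=1..N. beta k / T k * (\<Sum>t=1..T k.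
          eta k t * bregman nu nu' (xi k (t - 1)) x
          - (mu + eta k t + p k) * bregman nu nu' (xi k t) x
          + p k * bregman nu nu' (xo (k - 1)) x))
       \<le> beta 1 / T 1 * (eta 1 1 + p 1 * T 1) * bregman nu nu' (xo 0) x
          - beta N / T N * (mu + eta N (T N) + p N) * bregman nu nu' (xo N) x))"
proof -
  have beta_nonneg: "0 \<le> beta k" for k
    using beta[of k] by simp
  have zi_mem: "zi k t \<in> Zs" if "1 \<le> k" "k \<le> N" "1 \<le> t" "t \<le> T k" for k t
    using z_step[OF that] unfolding is_argmin_on_def Let_def by auto
  note dual = bregman_epoch_telescope_le[where y = zi and yo = zo and beta = beta and s = q,
      OF zeta' N T beta_nonneg z0 init_z zi_mem fin_z]
  have xi_mem: "xi k t \<in> Xs" if "1 \<le> k" "k \<le> N" "1 \<le> t" "t \<le> T k" for k t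
    using x_step[OF that] unfolding is_argmin_on_def by auto
  note primal = bregman_epoch_sum_le[where y = xi and yo = xo and beta = beta and s = eta
      and r = "\<lambda>k t. mu + eta k t + p k" and e = p,
      OF nu' N T beta_nonneg x0 init_x xi_mem fin_x]
  show ?thesis
    by (intro conjI impI ballI; elim conjE; rule dual primal; assumption)
qed

end
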